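(* Let $k,\ell,n,p$ be positive integers, and let $C\in\mathbb{R}^{k\times \ell}$, $A\in\mathbb{R}^{n\times p}$, $M\in\mathbb{R}^{k\times k}$ symmetric positive semidefinite, and $B\in\mathbb{R}^{k\times n}$ injective. Let $(u,y)\in\mathbb{R}^k\times\mathbb{R}^n$ and $q,s\in\mathbb{R}^\ell_{++}$, $w,r\in\mathbb{R}^p_{++}$ (vectors with strictly positive entries), and set $Q=\mathrm{diag}(q)$, $S=\mathrm{diag}(s)$, $W=\mathrm{diag}(w)$, $R=\mathrm{diag}(r)$. Consider the square matrix \[ F^{(1)}=\begin{bmatrix} 0&0&-C^T&0&-I&0\\ 0&0&0&-A^T&0&-I\\ C&0&M&-B&0&0\\ 0&A&B^T&0&0&0\\ Q&0&0&0&S&0\\ 0&W&0&0&0&R \end{bmatrix} \] (acting on vectors ordered as $(q,w,u,y,s,r)$). Then $F^{(1)}$ is invertible if and only if the matrix \[ \begin{bmatrix} M+CSQ^{-1}C^T & -B\\ B^T & ARW^{-1}A^T\end{bmatrix} \] is invertible, and this in turn holds if and only if $\mathrm{null}(M)\cap\mathrm{null}(B^T)\cap\mathrm{null}(C^T)=\{0\}$.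
   Context: $F^{(1)}$ is the Jacobian of the relaxed KKT map $F_\mu(q,w,u,y,s,r)=(C^Tu+s-c,\;A^Ty+r-a,\;Mu+Cq-By-b,\;B^Tu+Aw,\;Qs-\mu\mathbf{1},\;Wr-\mu\mathbf{1})$ for the problem of minimizing $\rho(y)=\sup_{C^Tu\le c}\{\langle u,b+By\rangle-\tfrac12\langle u,Mu\rangle\}$ subject to $A^Ty\le a$. $\mathrm{null}(\cdot)$ denotes the null space. *)

theory Defs
  imports "HOL-Analysis.Analysis"
begin

definition diagm :: "real ^ 'a \<Rightarrow> real ^ 'a ^ 'a" where
  "diagm v = (\<chi> i j. if i = j then v $ i else 0)"

definition nullsp :: "real ^ 'b ^ 'a \<Rightarrow> (real ^ 'b) set" where
  "nullsp X = {x. X *v x = 0}"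

definition blockmat2 ::
  "real ^ 'b ^ 'a \<Rightarrow> real ^ 'd ^ 'a \<Rightarrow> real ^ 'b ^ 'c \<Rightarrow> real ^ 'd ^ 'c
     \<Rightarrow> real ^ ('b + 'd) ^ ('a + 'c)" where
  "blockmat2 P Q' R' S' = (\<chi> i j. case i of
      Inl a \<Rightarrow> (case j of Inl b \<Rightarrow> P $ a $ b | Inr d \<Rightarrow> Q' $ a $ d)
    | Inr c \<Rightarrow> (case j of Inl b \<Rightarrow> R' $ c $ b | Inr d \<Rightarrow> S' $ c $ d))"

definition dlt :: "'a \<Rightarrow> 'a \<Rightarrow> real" where
  "dlt a b = (if a = b then 1 else 0)"

text \<open>The 6x6 block matrix F^(1), rows/columns ordered as (q,w,u,y,s,r), indexed by
  the sum type 'l + 'p + 'k + 'n + 'l + 'p.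
  C :: k x l, A :: n x p, M :: k x k, B :: k x n.\<close>
definition F1 ::
  "real ^ 'l ^ 'k \<Rightarrow> real ^ 'p ^ 'n \<Rightarrow> real ^ 'k ^ 'k \<Rightarrow> real ^ 'n ^ 'k
   \<Rightarrow> real ^ 'l \<Rightarrow> real ^ 'p \<Rightarrow> real ^ 'l \<Rightarrow> real ^ 'p
   \<Rightarrow> real ^ ('l + 'p + 'k + 'n + 'l + 'p) ^ ('l + 'p + 'k + 'n + 'l + 'p)" where
  "F1 C A M B q w s r = (\<chi> i j. case i of
      Inl a \<Rightarrow> (case j of
          Inr (Inr (Inl c)) \<Rightarrow> - (C $ c $ a)
        | Inr (Inr (Inr (Inr (Inl e)))) \<Rightarrow> - dlt a e
        | _ \<Rightarrow> 0)
    | Inr (Inl b) \<Rightarrow> (case j of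
          Inr (Inr (Inr (Inl d))) \<Rightarrow> - (A $ d $ b)
        | Inr (Inr (Inr (Inr (Inr f)))) \<Rightarrow> - dlt b f
        | _ \<Rightarrow> 0)
    | Inr (Inr (Inl c)) \<Rightarrow> (case j of
          Inl a \<Rightarrow> C $ c $ a
        | Inr (Inr (Inl c')) \<Rightarrow> M $ c $ c'
        | Inr (Inr (Inr (Inl d))) \<Rightarrow> - (B $ c $ d)
        | _ \<Rightarrow> 0)
    | Inr (Inr (Inr (Inl d))) \<Rightarrow> (case j of
          Inr (Inl b) \<Rightarrow> A $ d $ b
        | Inr (Inr (Inl c)) \<Rightarrow> B $ c $ d
        | _ \<Rightarrow> 0)
    | Inr (Inr (Inr (Inr (Inl e)))) \<Rightarrow> (case j of
          Inl a \<Rightarrow> dlt e a * q $ e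
        | Inr (Inr (Inr (Inr (Inl e')))) \<Rightarrow> dlt e e' * s $ e
        | _ \<Rightarrow> 0)
    | Inr (Inr (Inr (Inr (Inr f)))) \<Rightarrow> (case j of
          Inr (Inl b) \<Rightarrow> dlt f b * w $ f
        | Inr (Inr (Inr (Inr (Inr f')))) \<Rightarrow> dlt f f' * r $ f
        | _ \<Rightarrow> 0))"

end

theory Submission
  imports Defs
begin

(*
  Both matrices are invertible iff their kernels are trivial, and both kernels are governed by
  the same reduced system
    M u + C D C^T u - B y = 0,   B^T u + A E A^T y = 0
  with positive diagonal weights D = S Q^-1 and E = R W^-1: for F^(1) this comes from solving
  the complementarity rows for the q- and w-blocks and the first two rows for the s- and r-blocks.
  Pairing the two equations with u and y cancels the skew coupling through B and leaves
  u.Mu + |C^T u|_D^2 + |A^T y|_E^2 = 0, so Mu = 0, C^T u = 0, A^T y = 0; then By = 0 gives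
  y = 0 by injectivity of B, and B^T u = 0. Hence u lies in null(M), null(B^T) and null(C^T),
  and conversely any such u spans a kernel vector of either matrix.
*)

(* keep transpose X *v u in the form of the statement instead of u v* X *)
declare transpose_matrix_vector [simp del]

definition vec_sum :: "'a ^ 'm::finite \<Rightarrow> 'a ^ 'n::finite \<Rightarrow> 'a ^ ('m + 'n)" where
  "vec_sum u v = (\<chi> i. case i of Inl a \<Rightarrow> u $ a | Inr b \<Rightarrow> v $ b)"

lemma vec_sum_nth [simp]:
  "vec_sum u v $ Inl a = u $ a" "vec_sum u v $ Inr b = v $ b"
  by (simp_all add: vec_sum_def)

lemma all_vec_sum:
  fixes P :: "'a ^ ('m::finite + 'n::finite) \<Rightarrow> bool"
  shows "(\<forall>x. P x) \<longleftrightarrow> (\<forall>u v. P (vec_sum u v))"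
proof (intro iffI allI)
  fix x :: "'a ^ ('m + 'n)"
  assume "\<forall>u v. P (vec_sum u v)"
  moreover have "x = vec_sum (\<chi> i. x $ Inl i) (\<chi> i. x $ Inr i)"
    by (simp add: vec_eq_iff vec_sum_def split: sum.split)
  ultimately show "P x"
    by metis
qed simp

lemma vec_sum_eq_0_iff [simp]: "vec_sum u v = 0 \<longleftrightarrow> u = 0 \<and> v = 0"
  by (auto simp: vec_eq_iff vec_sum_def split: sum.split)

lemma sum_UNIV_Plus:
  "sum g (UNIV :: ('a::finite + 'b::finite) set) = (\<Sum>a\<in>UNIV. g (Inl a)) + (\<Sum>b\<in>UNIV. g (Inr b))"
  by (simp add: sum.Plus flip: UNIV_Plus_UNIV)

lemma blockmat2_mult_vec_sum:
  "blockmat2 P Q R S *v vec_sum u v = vec_sum (P *v u + Q *v v) (R *v u + S *v v)"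
  by (simp add: vec_eq_iff blockmat2_def matrix_vector_mult_def sum_UNIV_Plus vec_sum_def
      split: sum.split)

lemma F1_mult_vec_sum:
  "F1 C A M B q w s r *v vec_sum a (vec_sum b (vec_sum c (vec_sum d (vec_sum e f)))) =
     vec_sum (- (transpose C *v c) - e)
      (vec_sum (- (transpose A *v d) - f)
       (vec_sum (C *v a + M *v c - B *v d)
        (vec_sum (A *v b + transpose B *v c)
         (vec_sum (q * a + s * e) (w * b + r * f)))))"
  by (simp add: vec_eq_iff F1_def dlt_def matrix_vector_mult_def transpose_def sum_UNIV_Plus
      vec_sum_def sum_negf mult.commute if_distrib[of "(*) _"] cong: if_cong split: sum.split)

lemma matrix_vector_mult_uminus_rdistrib: "(- X) *v x = - (X *v (x :: 'a::ring_1 ^ _))"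
  by (simp add: vec_eq_iff matrix_vector_mult_def sum_negf)

lemma invertible_iff_kernel_trivial:
  "invertible (X :: 'a::field ^ 'n::finite ^ 'n) \<longleftrightarrow> (\<forall>x. X *v x = 0 \<longrightarrow> x = 0)"
  by (simp add: invertible_left_inverse matrix_left_invertible_ker)

lemma diagm_mult_vec: "diagm v *v x = v * x"
  by (simp add: vec_eq_iff matrix_vector_mult_def diagm_def if_distrib[of "\<lambda>t. t * _"]
      cong: if_cong)

lemma diagm_mult_diagm: "diagm v ** diagm u = diagm (v * u)"
  by (simp add: vec_eq_iff matrix_matrix_mult_def diagm_def if_distrib[of "\<lambda>t. t * _"]
      cong: if_cong)

lemma matrix_inv_diagm:
  assumes "\<forall>i. v $ i \<noteq> 0"
  shows "matrix_inv (diagm v) = diagm (\<chi> i. inverse (v $ i))"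
proof -
  let ?D = "diagm v" and ?E = "diagm (\<chi> i. inverse (v $ i))"
  have one: "diagm (\<chi> i. 1) = mat 1"
    by (simp add: vec_eq_iff mat_def diagm_def)
  have DE: "?D ** ?E = mat 1" and ED: "?E ** ?D = mat 1"
    using assms by (simp_all add: diagm_mult_diagm times_vec_def one)
  then have "?D ** matrix_inv ?D = mat 1 \<and> matrix_inv ?D ** ?D = mat 1"
    unfolding matrix_inv_def by (rule someI[where x = ?E, OF conjI])
  then have left_inv: "matrix_inv ?D ** ?D = mat 1" ..
  have "matrix_inv ?D = matrix_inv ?D ** (?D ** ?E)"
    using DE by simp
  also have "\<dots> = (matrix_inv ?D ** ?D) ** ?E"
    by (simp add: matrix_mul_assoc)
  finally show ?thesis
    using left_inv by simp
qed

lemma diagm_mult_matrix_inv_diagm: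
  assumes "\<forall>i. q $ i \<noteq> 0"
  shows "diagm s ** matrix_inv (diagm q) = diagm (\<chi> i. s $ i / q $ i)"
  using assms by (simp add: matrix_inv_diagm diagm_mult_diagm times_vec_def divide_inverse)

lemma vec_mult_eq_iff_eq_divide_mult:
  fixes q s a e :: "'a::field ^ 'n::finite"
  assumes "\<forall>i. q $ i \<noteq> 0"
  shows "q * a = s * e \<longleftrightarrow> a = (\<chi> i. s $ i / q $ i) * e"
proof -
  have "q $ i * a $ i = s $ i * e $ i \<longleftrightarrow> a $ i = s $ i / q $ i * e $ i" for i
    using assms by (auto simp: field_simps)
  then show ?thesis
    by (simp add: vec_eq_iff)
qed

lemma inner_mult_vec_transpose:
  fixes X :: "real ^ 'n::finite ^ 'm::finite"
  shows "u \<bullet> (X *v v) = (transpose X *v u) \<bullet> v"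
  by (simp add: dot_lmul_matrix transpose_matrix_vector)

lemma inner_weighted_nonneg:
  fixes d v :: "real ^ 'n::finite"
  assumes "\<forall>i. 0 \<le> d $ i"
  shows "0 \<le> v \<bullet> (d * v)"
  using assms by (simp add: inner_vec_def sum_nonneg mult.left_commute)

lemma inner_weighted_eq_0_iff:
  fixes d v :: "real ^ 'n::finite"
  assumes "\<forall>i. 0 < d $ i"
  shows "v \<bullet> (d * v) = 0 \<longleftrightarrow> v = 0"
proof -
  have "v \<bullet> (d * v) = (\<Sum>i\<in>UNIV. d $ i * (v $ i)\<^sup>2)"
    by (simp add: inner_vec_def power2_eq_square algebra_simps)
  moreover have "0 \<le> d $ i * (v $ i)\<^sup>2" and "d $ i \<noteq> 0" for i
    using assms[rule_format, of i] by simp_all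
  ultimately show ?thesis
    by (simp add: sum_nonneg_eq_0_iff vec_eq_iff)
qed

lemma psd_quadratic_form_eq_0:
  fixes M :: "real ^ 'n::finite ^ 'n"
  assumes sym: "transpose M = M" and psd: "\<forall>x. 0 \<le> x \<bullet> (M *v x)"
    and zero: "x \<bullet> (M *v x) = 0"
  shows "M *v x = 0"
proof (rule ccontr)
  assume "M *v x \<noteq> 0"
  define v where "v = M *v x"
  define a where "a = v \<bullet> v"
  define b where "b = v \<bullet> (M *v v)"
  have "0 < a" "0 \<le> b"
    using \<open>M *v x \<noteq> 0\<close> psd by (simp_all add: a_def b_def v_def)
  have "x \<bullet> (M *v v) = a"
    by (simp add: inner_mult_vec_transpose sym a_def v_def)
  then have expand: "(x - t *\<^sub>R v) \<bullet> (M *v (x - t *\<^sub>R v)) = t\<^sup>2 * b - 2 * t * a" for t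
    using zero
    by (simp add: matrix_vector_mult_diff_distrib matrix_vector_mult_scaleR inner_diff_left
        inner_diff_right power2_eq_square algebra_simps a_def b_def v_def)
  have quadratic: "0 \<le> t * (t * b - 2 * a)" for t
    using psd[rule_format, of "x - t *\<^sub>R v"] unfolding expand
    by (simp add: power2_eq_square algebra_simps)
  define t where "t = a / (b + 1)"
  have "0 < t" and "t * b < a"
    using \<open>0 < a\<close> \<open>0 \<le> b\<close> by (simp_all add: t_def field_simps)
  then have "t * (t * b - 2 * a) < 0"
    using \<open>0 < a\<close> by (simp add: mult_pos_neg)
  with quadratic show False
    by (simp add: not_le[symmetric])
qed

lemma weighted_saddle_system_kernel:
  fixes M :: "real ^ 'k::finite ^ 'k" and B :: "real ^ 'n::finite ^ 'k"
    and C :: "real ^ 'l::finite ^ 'k" and A :: "real ^ 'p::finite ^ 'n"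
    and d :: "real ^ 'l" and e :: "real ^ 'p"
  assumes M_sym: "transpose M = M" and M_psd: "\<forall>x. 0 \<le> x \<bullet> (M *v x)"
    and B_inj: "inj ((*v) B)"
    and d_pos: "\<forall>i. 0 < d $ i" and e_pos: "\<forall>i. 0 < e $ i"
    and eq_u: "M *v u + C *v (d * (transpose C *v u)) - B *v y = 0"
    and eq_y: "transpose B *v u + A *v (e * (transpose A *v y)) = 0"
  shows "u \<in> nullsp M \<inter> nullsp (transpose B) \<inter> nullsp (transpose C)" and "y = 0"
proof -
  let ?Cu = "transpose C *v u" and ?Ay = "transpose A *v y"
  have "u \<bullet> (B *v y) = y \<bullet> (transpose B *v u)"
    by (metis inner_mult_vec_transpose inner_commute)
  then have "u \<bullet> (M *v u) + ?Cu \<bullet> (d * ?Cu) + ?Ay \<bullet> (e * ?Ay)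
      = u \<bullet> (M *v u + C *v (d * ?Cu) - B *v y) + y \<bullet> (transpose B *v u + A *v (e * ?Ay))"
    by (simp add: inner_add_right inner_diff_right inner_mult_vec_transpose)
  also have "\<dots> = 0"
    by (simp add: eq_u eq_y)
  finally have energy: "u \<bullet> (M *v u) + ?Cu \<bullet> (d * ?Cu) + ?Ay \<bullet> (e * ?Ay) = 0" .
  moreover have "0 \<le> u \<bullet> (M *v u)" "0 \<le> ?Cu \<bullet> (d * ?Cu)" "0 \<le> ?Ay \<bullet> (e * ?Ay)"
    using M_psd d_pos e_pos by (simp_all add: inner_weighted_nonneg less_imp_le)
  ultimately have "u \<bullet> (M *v u) = 0" "?Cu \<bullet> (d * ?Cu) = 0" "?Ay \<bullet> (e * ?Ay) = 0"
    by linarith+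
  then have Mu: "M *v u = 0" and Cu: "?Cu = 0" and Ay: "?Ay = 0"
    using psd_quadratic_form_eq_0[OF M_sym M_psd] inner_weighted_eq_0_iff d_pos e_pos by blast+
  have "B *v y = B *v 0"
    using eq_u by (simp add: Mu Cu)
  with B_inj show "y = 0"
    by (rule injD)
  have "transpose B *v u = 0"
    using eq_y by (simp add: Ay)
  with Mu Cu show "u \<in> nullsp M \<inter> nullsp (transpose B) \<inter> nullsp (transpose C)"
    by (simp add: nullsp_def)
qed

lemma F1_kernel_trivial_iff:
  fixes C :: "real ^ 'l::finite ^ 'k::finite" and A :: "real ^ 'p::finite ^ 'n::finite"
    and M :: "real ^ 'k ^ 'k" and B :: "real ^ 'n ^ 'k"
    and q s :: "real ^ 'l" and w r :: "real ^ 'p"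
  assumes M_sym: "transpose M = M" and M_psd: "\<forall>x. 0 \<le> x \<bullet> (M *v x)"
    and B_inj: "inj ((*v) B)"
    and q_pos: "\<forall>i. 0 < q $ i" and s_pos: "\<forall>i. 0 < s $ i"
    and w_pos: "\<forall>i. 0 < w $ i" and r_pos: "\<forall>i. 0 < r $ i"
  shows "(\<forall>x. F1 C A M B q w s r *v x = 0 \<longrightarrow> x = 0) \<longleftrightarrow>
    nullsp M \<inter> nullsp (transpose B) \<inter> nullsp (transpose C) = {0}"
    (is "?trivial \<longleftrightarrow> ?N = {0}")
proof
  assume ?trivial
  have "u = 0" if "u \<in> ?N" for u
  proof -
    have "F1 C A M B q w s r *v vec_sum 0 (vec_sum 0 (vec_sum u (vec_sum 0 (vec_sum 0 0)))) = 0"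
      using that by (simp add: F1_mult_vec_sum nullsp_def)
    from \<open>?trivial\<close>[rule_format, OF this] show "u = 0"
      by simp
  qed
  moreover have "0 \<in> ?N"
    by (simp add: nullsp_def)
  ultimately show "?N = {0}"
    by blast
next
  assume N: "?N = {0}"
  show ?trivial
    unfolding all_vec_sum
  proof (intro allI impI)
    fix dq dw du dy ds dr
    assume "F1 C A M B q w s r *v vec_sum dq (vec_sum dw (vec_sum du (vec_sum dy (vec_sum ds dr)))) = 0"
    then have ds: "ds = - (transpose C *v du)" and dr: "dr = - (transpose A *v dy)"
      and eq_u: "C *v dq + M *v du - B *v dy = 0" and eq_y: "A *v dw + transpose B *v du = 0"
      and "q * dq + s * ds = 0" and "w * dw + r * dr = 0"
      by (simp_all add: F1_mult_vec_sum eq_neg_iff_add_eq_0 add.commute)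
    then have dq: "dq = (\<chi> i. s $ i / q $ i) * (transpose C *v du)"
      and dw: "dw = (\<chi> i. r $ i / w $ i) * (transpose A *v dy)"
      using q_pos w_pos by (simp_all add: vec_mult_eq_iff_eq_divide_mult less_imp_neq[symmetric])
    have "M *v du + C *v ((\<chi> i. s $ i / q $ i) * (transpose C *v du)) - B *v dy = 0"
      using eq_u by (simp add: dq algebra_simps)
    moreover have "transpose B *v du + A *v ((\<chi> i. r $ i / w $ i) * (transpose A *v dy)) = 0"
      using eq_y by (simp add: dw algebra_simps)
    moreover have "\<forall>i. 0 < (\<chi> i. s $ i / q $ i) $ i" "\<forall>i. 0 < (\<chi> i. r $ i / w $ i) $ i"
      using q_pos s_pos w_pos r_pos by simp_all
    ultimately have "du \<in> ?N" and "dy = 0"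
      using weighted_saddle_system_kernel[OF M_sym M_psd B_inj] by blast+
    then show "vec_sum dq (vec_sum dw (vec_sum du (vec_sum dy (vec_sum ds dr)))) = 0"
      using N by (simp add: dq dw ds dr)
  qed
qed

lemma reduced_kernel_trivial_iff:
  fixes C :: "real ^ 'l::finite ^ 'k::finite" and A :: "real ^ 'p::finite ^ 'n::finite"
    and M :: "real ^ 'k ^ 'k" and B :: "real ^ 'n ^ 'k"
    and d :: "real ^ 'l" and e :: "real ^ 'p"
  assumes M_sym: "transpose M = M" and M_psd: "\<forall>x. 0 \<le> x \<bullet> (M *v x)"
    and B_inj: "inj ((*v) B)"
    and d_pos: "\<forall>i. 0 < d $ i" and e_pos: "\<forall>i. 0 < e $ i"
  shows "(\<forall>x. blockmat2 (M + C ** diagm d ** transpose C) (- B)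
              (transpose B) (A ** diagm e ** transpose A) *v x = 0 \<longrightarrow> x = 0) \<longleftrightarrow>
    nullsp M \<inter> nullsp (transpose B) \<inter> nullsp (transpose C) = {0}"
    (is "(\<forall>x. ?G *v x = 0 \<longrightarrow> x = 0) \<longleftrightarrow> ?N = {0}")
proof -
  have G: "?G *v vec_sum u y = vec_sum (M *v u + C *v (d * (transpose C *v u)) - B *v y)
      (transpose B *v u + A *v (e * (transpose A *v y)))" for u y
    by (simp add: blockmat2_mult_vec_sum matrix_vector_mult_add_rdistrib diagm_mult_vec
        matrix_vector_mult_uminus_rdistrib flip: matrix_vector_mul_assoc)
  show ?thesis
    unfolding all_vec_sum
  proof
    assume trivial: "\<forall>u y. ?G *v vec_sum u y = 0 \<longrightarrow> vec_sum u y = 0"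
    have "u = 0" if "u \<in> ?N" for u
      using that trivial[rule_format, of u 0] by (simp add: G nullsp_def)
    moreover have "0 \<in> ?N"
      by (simp add: nullsp_def)
    ultimately show "?N = {0}"
      by blast
  next
    assume N: "?N = {0}"
    show "\<forall>u y. ?G *v vec_sum u y = 0 \<longrightarrow> vec_sum u y = 0"
    proof (intro allI impI)
      fix u y
      assume "?G *v vec_sum u y = 0"
      then have "M *v u + C *v (d * (transpose C *v u)) - B *v y = 0"
        and "transpose B *v u + A *v (e * (transpose A *v y)) = 0"
        by (simp_all add: G)
      from weighted_saddle_system_kernel[OF M_sym M_psd B_inj d_pos e_pos this] N
      show "vec_sum u y = 0"
        by simp
    qed
  qed
qed

theorem theorem5p2:
  fixes C :: "real ^ 'l::finite ^ 'k::finite"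
    and A :: "real ^ 'p::finite ^ 'n::finite"
    and M :: "real ^ 'k ^ 'k"
    and B :: "real ^ 'n ^ 'k"
    and q s :: "real ^ 'l"
    and w r :: "real ^ 'p"
  assumes M_sym: "transpose M = M"
    and M_psd: "\<forall>x. 0 \<le> x \<bullet> (M *v x)"
    and B_inj: "inj ((*v) B)"
    and q_pos: "\<forall>i. 0 < q $ i" and s_pos: "\<forall>i. 0 < s $ i"
    and w_pos: "\<forall>i. 0 < w $ i" and r_pos: "\<forall>i. 0 < r $ i"
  shows "(invertible (F1 C A M B q w s r) \<longleftrightarrow>
            invertible (blockmat2
               (M + C ** diagm s ** matrix_inv (diagm q) ** transpose C) (- B)
               (transpose B) (A ** diagm r ** matrix_inv (diagm w) ** transpose A)))
       \<and> (invertible (blockmat2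
               (M + C ** diagm s ** matrix_inv (diagm q) ** transpose C) (- B)
               (transpose B) (A ** diagm r ** matrix_inv (diagm w) ** transpose A))
          \<longleftrightarrow> nullsp M \<inter> nullsp (transpose B) \<inter> nullsp (transpose C) = {0})"
proof -
  let ?N = "nullsp M \<inter> nullsp (transpose B) \<inter> nullsp (transpose C)"
  have weights: "C ** diagm s ** matrix_inv (diagm q) = C ** diagm (\<chi> i. s $ i / q $ i)"
    "A ** diagm r ** matrix_inv (diagm w) = A ** diagm (\<chi> i. r $ i / w $ i)"
    using q_pos w_pos
    by (simp_all add: diagm_mult_matrix_inv_diagm less_imp_neq[symmetric] flip: matrix_mul_assoc)
  have "\<forall>i. 0 < (\<chi> i. s $ i / q $ i) $ i" and "\<forall>i. 0 < (\<chi> i. r $ i / w $ i) $ i"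
    using q_pos s_pos w_pos r_pos by simp_all
  from reduced_kernel_trivial_iff[OF M_sym M_psd B_inj this, of C A]
  have "invertible (blockmat2
               (M + C ** diagm s ** matrix_inv (diagm q) ** transpose C) (- B)
               (transpose B) (A ** diagm r ** matrix_inv (diagm w) ** transpose A))
        \<longleftrightarrow> ?N = {0}"
    by (simp add: invertible_iff_kernel_trivial weights)
  moreover have "invertible (F1 C A M B q w s r) \<longleftrightarrow> ?N = {0}"
    using F1_kernel_trivial_iff[OF assms] by (simp add: invertible_iff_kernel_trivial)
  ultimately show ?thesis
    by blast
qed

end
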